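(* Let $S,T$ be numerical semigroups, $w\ge1$ an integer and $f(x)\in\mathbb Z[x]$ such that $\mathrm H_S(x^w)f(x)=\mathrm H_T(x)$. Then (a) $f(0)=1$; (b) $f(1)=w$; (c) $f'(1)=w\bigl(\mathrm g(T)-w\,\mathrm g(S)+(w-1)/2\bigr)$; (d) $\mathrm F(T)=w\,\mathrm F(S)+\deg(f)$.
   Context: A numerical semigroup is a submonoid $S$ of $(\mathbb N,+)$ with $\mathbb N\setminus S$ finite. $\mathrm H_S(x)=\sum_{s\in S}x^s$ is its Hilbert series, $\mathrm F(S)$ its Frobenius number (largest integer not in $S$), and $\mathrm g(S)=\#(\mathbb N\setminus S)$ its genus. *)

theory Defs
  imports Complex_Main "HOL-Computational_Algebra.Polynomial_FPS"
begin

definition numerical_semigroup :: "nat set \<Rightarrow> bool" where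
  "numerical_semigroup S \<longleftrightarrow>
     0 \<in> S \<and> (\<forall>a\<in>S. \<forall>b\<in>S. a + b \<in> S) \<and> finite (UNIV - S)"

definition hilbert_series :: "nat set \<Rightarrow> int fps" where
  "hilbert_series S = Abs_fps (\<lambda>n. if n \<in> S then 1 else 0)"

definition frobenius :: "nat set \<Rightarrow> int" where
  "frobenius S = (if S = UNIV then -1 else int (Max (UNIV - S)))"

definition genus :: "nat set \<Rightarrow> nat" where
  "genus S = card (UNIV - S)"

end

theory Submission
  imports Defs
begin

text \<open>Multiplying by 1 - x turns H_S into the polynomial P_S(x) = 1 - (1 - x) G_S(x),
  where G_S is the sum of x^g over the gaps g of S; it satisfies P_S(0) = P_S(1) = 1,
  P_S'(1) = g(S) and deg P_S = F(S) + 1. Substituting x^w and multiplying the hypothesis by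
  1 - x^w = (1 - x)(1 + x + ... + x^(w-1)) yields the polynomial identity
  f(x) P_S(x^w) = (1 + x + ... + x^(w-1)) P_T(x). The four claims follow by evaluating it
  at 0 and at 1, differentiating it at 1, and comparing degrees.\<close>

definition gap_poly :: "nat set \<Rightarrow> int poly" where
  "gap_poly S = (\<Sum>g\<in>UNIV - S. monom 1 g)"

definition semigroup_poly :: "nat set \<Rightarrow> int poly" where
  "semigroup_poly S = 1 - [:1, -1:] * gap_poly S"

definition geometric_poly :: "nat \<Rightarrow> int poly" where
  "geometric_poly w = (\<Sum>i<w. monom 1 i)"

lemma coeff_gap_poly:
  "finite (UNIV - S) \<Longrightarrow> coeff (gap_poly S) n = (if n \<in> S then 0 else 1)"
  unfolding gap_poly_def by (simp add: coeff_sum coeff_monom)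

lemma coeff_semigroup_poly:
  assumes "finite (UNIV - S)" "0 \<in> S"
  shows "coeff (semigroup_poly S) n =
    (if n = 0 then 1 else (if n \<in> S then 1 else 0) - (if n - 1 \<in> S then 1 else 0))"
  using assms by (cases n) (auto simp: semigroup_poly_def coeff_gap_poly coeff_pCons)

lemma fps_of_poly_semigroup_poly:
  assumes "finite (UNIV - S)" "0 \<in> S"
  shows "fps_of_poly (semigroup_poly S) = (1 - fps_X) * hilbert_series S"
  using assms by (intro fps_ext)
    (auto simp: coeff_semigroup_poly[OF assms] algebra_simps fps_X_mult_nth hilbert_series_def)

lemma poly_semigroup_poly_0:
  "finite (UNIV - S) \<Longrightarrow> 0 \<in> S \<Longrightarrow> poly (semigroup_poly S) 0 = 1"
  by (simp add: poly_0_coeff_0 coeff_semigroup_poly)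

lemma poly_semigroup_poly_1: "poly (semigroup_poly S) 1 = 1"
  by (simp add: semigroup_poly_def)

lemma poly_pderiv_semigroup_poly_1:
  assumes "finite (UNIV - S)"
  shows "poly (pderiv (semigroup_poly S)) 1 = int (genus S)"
proof -
  have "pderiv (semigroup_poly S) = gap_poly S - [:1, -1:] * pderiv (gap_poly S)"
    by (simp only: semigroup_poly_def pderiv_diff pderiv_mult) (simp add: pderiv_pCons)
  then show ?thesis
    using assms by (simp add: gap_poly_def poly_sum poly_monom genus_def)
qed

lemma frobenius_not_in:
  assumes "finite (UNIV - S)" "S \<noteq> UNIV"
  shows "nat (frobenius S) \<notin> S"
  using Max_in[OF assms(1)] assms(2) by (auto simp: frobenius_def)

lemma in_if_frobenius_less:
  assumes "finite (UNIV - S)" "frobenius S < int n"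
  shows "n \<in> S"
  using assms Max_ge[OF assms(1), of n] by (fastforce simp: frobenius_def split: if_splits)

lemma degree_semigroup_poly:
  assumes "finite (UNIV - S)" "0 \<in> S"
  shows "int (degree (semigroup_poly S)) = frobenius S + 1"
proof (cases "S = UNIV")
  case True
  have "degree (semigroup_poly S) \<le> 0"
    by (rule degree_le, intro allI impI, subst coeff_semigroup_poly[OF assms]) (simp add: True)
  then show ?thesis
    using True by (simp add: frobenius_def)
next
  case False
  define F where "F = nat (frobenius S)"
  have F: "frobenius S = int F"
    using False by (simp add: F_def frobenius_def)
  have "degree (semigroup_poly S) \<le> F + 1"
    by (rule degree_le)
      (auto simp: coeff_semigroup_poly[OF assms] F intro!: in_if_frobenius_less[OF assms(1)])
  moreover have "F + 1 \<le> degree (semigroup_poly S)"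
    using frobenius_not_in[OF assms(1) False] in_if_frobenius_less[OF assms(1), of "F + 1"]
    by (intro le_degree) (simp add: coeff_semigroup_poly[OF assms] F)
  ultimately show ?thesis
    by (simp add: F)
qed

lemma coeff_geometric_poly: "coeff (geometric_poly w) n = (if n < w then 1 else 0)"
  unfolding geometric_poly_def by (simp add: coeff_sum coeff_monom)

lemma degree_geometric_poly: "w \<ge> 1 \<Longrightarrow> degree (geometric_poly w) = w - 1"
  by (rule antisym, rule degree_le) (auto simp: coeff_geometric_poly intro!: le_degree)

lemma poly_geometric_poly_0: "w \<ge> 1 \<Longrightarrow> poly (geometric_poly w) 0 = 1"
  by (simp add: poly_0_coeff_0 coeff_geometric_poly)

lemma poly_geometric_poly_1: "poly (geometric_poly w) 1 = int w"
  by (simp add: geometric_poly_def poly_sum poly_monom)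

lemma poly_pderiv_geometric_poly_1: "2 * poly (pderiv (geometric_poly w)) 1 = int w * (int w - 1)"
proof (induction w)
  case 0
  then show ?case by (simp add: geometric_poly_def)
next
  case (Suc w)
  have "geometric_poly (Suc w) = geometric_poly w + monom 1 w"
    by (simp add: geometric_poly_def)
  then have "poly (pderiv (geometric_poly (Suc w))) 1 = poly (pderiv (geometric_poly w)) 1 + int w"
    by (simp add: pderiv_add pderiv_monom poly_monom)
  then show ?case
    using Suc by (simp add: algebra_simps)
qed

lemma fps_of_poly_geometric_poly: "fps_of_poly (geometric_poly w) * (1 - fps_X) = 1 - fps_X ^ w"
  by (simp add: geometric_poly_def fps_of_poly_sum fps_of_poly_monom' one_diff_power_eq mult.commute)

lemma fps_of_poly_semigroup_poly_pcompose:
  assumes "finite (UNIV - S)" "0 \<in> S" "w \<ge> 1"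
  shows "fps_of_poly (pcompose (semigroup_poly S) (monom 1 w)) =
    (1 - fps_X ^ w) * fps_compose (hilbert_series S) (fps_X ^ w)"
proof -
  have X0: "fps_nth (fps_X ^ w :: int fps) 0 = 0" and m0: "coeff (monom (1::int) w) 0 = 0"
    using assms(3) by (simp_all add: coeff_monom)
  have "fps_of_poly (pcompose (semigroup_poly S) (monom 1 w)) =
      fps_compose ((1 - fps_X) * hilbert_series S) (fps_X ^ w)"
    by (simp add: fps_of_poly_pcompose[OF m0] fps_of_poly_monom' fps_of_poly_semigroup_poly[OF assms(1,2)])
  then show ?thesis
    by (simp add: fps_compose_mult_distrib[OF X0] fps_compose_sub_distrib
        fps_X_fps_compose_startby0[OF X0])
qed

lemma hilbert_quotient_polynomial_identity:
  assumes S: "finite (UNIV - S)" "0 \<in> S" and T: "finite (UNIV - T)" "0 \<in> T" and "w \<ge> 1"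
    and f: "fps_compose (hilbert_series S) (fps_X ^ w) * fps_of_poly f = hilbert_series T"
  shows "f * pcompose (semigroup_poly S) (monom 1 w) = geometric_poly w * semigroup_poly T"
proof -
  have "fps_of_poly (f * pcompose (semigroup_poly S) (monom 1 w)) = (1 - fps_X ^ w) * hilbert_series T"
    by (simp add: fps_of_poly_mult fps_of_poly_semigroup_poly_pcompose[OF S \<open>w \<ge> 1\<close>]
        f[symmetric] ac_simps)
  also have "\<dots> = fps_of_poly (geometric_poly w * semigroup_poly T)"
    by (simp add: fps_of_poly_mult fps_of_poly_semigroup_poly[OF T]
        fps_of_poly_geometric_poly[symmetric] ac_simps)
  finally show ?thesis
    by (simp only: fps_of_poly_eq_iff)
qed

lemma poly_semigroup_poly_pcompose_monom_1:
  "poly (pcompose (semigroup_poly S) (monom 1 w)) 1 = 1"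
  by (simp add: poly_pcompose poly_monom poly_semigroup_poly_1)

lemma poly_pderiv_semigroup_poly_pcompose_monom_1:
  "finite (UNIV - S) \<Longrightarrow>
    poly (pderiv (pcompose (semigroup_poly S) (monom 1 w))) 1 = int w * int (genus S)"
  by (simp add: pderiv_pcompose poly_pcompose pderiv_monom poly_monom poly_pderiv_semigroup_poly_1)

lemma hilbert_quotient_pderiv_1:
  assumes "finite (UNIV - S)" "finite (UNIV - T)"
    and E: "f * pcompose (semigroup_poly S) (monom 1 w) = geometric_poly w * semigroup_poly T"
  shows "2 * poly (pderiv f) 1 =
    int w * (2 * int (genus T) - 2 * int w * int (genus S) + int w - 1)"
proof -
  have "poly f 1 = int w"
    using arg_cong[OF E, of "\<lambda>p. poly p 1"]
    by (simp add: poly_semigroup_poly_pcompose_monom_1 poly_geometric_poly_1 poly_semigroup_poly_1)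
  moreover have "poly (pderiv f) 1 + poly f 1 * (int w * int (genus S)) =
      poly (pderiv (geometric_poly w)) 1 + int w * int (genus T)"
    using arg_cong[OF E, of "\<lambda>p. poly (pderiv p) 1"] assms(1,2)
    by (simp add: pderiv_mult poly_semigroup_poly_pcompose_monom_1 poly_geometric_poly_1
        poly_semigroup_poly_1 poly_pderiv_semigroup_poly_pcompose_monom_1 poly_pderiv_semigroup_poly_1)
  ultimately show ?thesis
    using poly_pderiv_geometric_poly_1[of w] by (simp add: algebra_simps)
qed

lemma hilbert_quotient_degree:
  assumes S: "finite (UNIV - S)" "0 \<in> S" and T: "finite (UNIV - T)" "0 \<in> T" and "w \<ge> 1"
    and E: "f * pcompose (semigroup_poly S) (monom 1 w) = geometric_poly w * semigroup_poly T"
  shows "frobenius T = int w * frobenius S + int (degree f)"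
proof -
  have "geometric_poly w \<noteq> 0" "semigroup_poly T \<noteq> 0"
    "pcompose (semigroup_poly S) (monom 1 w) \<noteq> 0"
    using poly_geometric_poly_0[OF \<open>w \<ge> 1\<close>] poly_semigroup_poly_1[of T]
      poly_semigroup_poly_pcompose_monom_1[of S w] by auto
  moreover from calculation have "f \<noteq> 0"
    using E by auto
  ultimately have "degree f + degree (semigroup_poly S) * w = (w - 1) + degree (semigroup_poly T)"
    using arg_cong[OF E, of degree] \<open>w \<ge> 1\<close>
    by (simp add: degree_mult_eq degree_pcompose degree_monom_eq degree_geometric_poly)
  then have "int (degree f) + int (degree (semigroup_poly S)) * int w =
      int w - 1 + int (degree (semigroup_poly T))"
    using \<open>w \<ge> 1\<close> by (simp add: of_nat_diff flip: of_nat_mult of_nat_add)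
  then show ?thesis
    using degree_semigroup_poly[OF S] degree_semigroup_poly[OF T] by (simp add: algebra_simps)
qed

theorem lemma12:
  fixes S T :: "nat set" and w :: nat and f :: "int poly"
  assumes "numerical_semigroup S" and "numerical_semigroup T" and "w \<ge> 1"
    and "fps_compose (hilbert_series S) (fps_X ^ w) * fps_of_poly f = hilbert_series T"
  shows "poly f 0 = 1 \<and>
         poly f 1 = int w \<and>
         real_of_int (poly (pderiv f) 1) =
           real w * (real (genus T) - real w * real (genus S) + (real w - 1) / 2) \<and>
         frobenius T = int w * frobenius S + int (degree f)"
proof -
  have S: "finite (UNIV - S)" "0 \<in> S" and T: "finite (UNIV - T)" "0 \<in> T"
    using assms(1,2) by (auto simp: numerical_semigroup_def)
  have E: "f * pcompose (semigroup_poly S) (monom 1 w) = geometric_poly w * semigroup_poly T"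
    by (rule hilbert_quotient_polynomial_identity[OF S T assms(3,4)])
  have "poly f 0 = 1"
    using arg_cong[OF E, of "\<lambda>p. poly p 0"] assms(3)
    by (simp add: poly_pcompose poly_monom power_0_left poly_semigroup_poly_0[OF S]
        poly_geometric_poly_0 poly_semigroup_poly_0[OF T])
  moreover have "poly f 1 = int w"
    using arg_cong[OF E, of "\<lambda>p. poly p 1"]
    by (simp add: poly_semigroup_poly_pcompose_monom_1 poly_geometric_poly_1 poly_semigroup_poly_1)
  moreover have "real_of_int (2 * poly (pderiv f) 1) =
      real_of_int (int w * (2 * int (genus T) - 2 * int w * int (genus S) + int w - 1))"
    using hilbert_quotient_pderiv_1[OF S(1) T(1) E] by (rule arg_cong)
  then have "real_of_int (poly (pderiv f) 1) =
      real w * (real (genus T) - real w * real (genus S) + (real w - 1) / 2)"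
    by (simp add: field_simps)
  ultimately show ?thesis
    using hilbert_quotient_degree[OF S T assms(3) E] by blast
qed

end
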